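(* Let $\Gamma$ be a maximal consistent set of SBTrust, $\delta$ a propositional formula, and $(\Delta,\varphi,i)\in\mathit{max}([\delta]_\Gamma)$. Then (a) $\Delta$ is $\varphi$-likely for $\Gamma$; and (b) $\neg(\delta\to\varphi)\rightsquigarrow\bot\in\Gamma$.
   Context: $\mathcal{L}_T$: $\alpha::=\varphi\mid\varphi\rightsquigarrow\varphi\mid B(\alpha)\mid\alpha*\alpha\mid\neg\alpha$, with $\varphi$ ranging over classical propositional formulas (set $\mathcal{L}_{CL}$) and $*\in\{\land,\lor,\to,\leftrightarrow\}$. SBTrust is the Hilbert system ($\varphi,\psi,\chi,\varphi_i,\psi_i$ propositional; $\alpha,\beta\in\mathcal{L}_T$; rule outputs in $\mathcal{L}_T$): classical tautologies and Modus Ponens; $\varphi\rightsquigarrow\varphi$; $(\varphi\rightsquigarrow\bot)\to\neg\varphi$; $((\psi\land\chi)\rightsquigarrow\varphi)\to(\psi\rightsquigarrow(\chi\to\varphi))$; $(\neg(\varphi\leftrightarrow\psi)\rightsquigarrow\bot)\to((\varphi\rightsquigarrow\chi)\leftrightarrow(\psi\rightsquigarrow\chi))$; rule RCK: from $(\varphi_1\land\dots\land\varphi_n)\to\varphi_{n+1}$ infer $\bigwedge_{j\le n}(\psi\rightsquigarrow\varphi_j)\to(\psi\rightsquigarrow\varphi_{n+1})$; rule $\mathbf{S5_F}$: from $(\ell_1\land\dots\land\ell_n)\to\chi$ infer $(\ell_1\land\dots\land\ell_n)\to(\neg\chi\rightsquigarrow\bot)$, each $\ell_j$ being $\varphi_j\rightsquigarrow\psi_j$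 or its negation, $\chi$ propositional; $B(\alpha\to\beta)\to(B\alpha\to B\beta)$; $B\alpha\to\neg B\neg\alpha$; $B\alpha\to BB\alpha$; necessitation for $B$. A maximal consistent set (MCS) is $\Gamma\subseteq\mathcal{L}_T$ with $\Gamma\nvdash\bot$ and, for each $\alpha$, $\alpha\in\Gamma$ or $\neg\alpha\in\Gamma$. For MCSs, $\Gamma\leftrightsquigarrow\Delta$ iff they contain the same formulas of the form $\chi\rightsquigarrow\psi$; $[\Gamma]_\leftrightsquigarrow$ is the equivalence class. $\rightsquigarrow_\varphi(\Gamma)=\{\psi:\varphi\rightsquigarrow\psi\in\Gamma\}$, and $\Delta$ is $\varphi$-likely for $\Gamma$ if $\rightsquigarrow_\varphi(\Gamma)\subseteq\Delta$. Let $S_\Gamma=[\Gamma]_\leftrightsquigarrow\times\mathcal{L}_{CL}\times\{0,1,2\}$ and $[\delta]_\Gamma=\{(\Delta,\varphi,i)\in S_\Gamma:\delta\in\Delta\}$. Define $\succeq_\Gamma\subseteq S_\Gamma\times S_\Gamma$ by: $(\Delta,\varphi,i)\succeq_\Gamma(\Omega,\psi,j)$ iff ($\Delta$ is $\varphi$-likely for $\Gamma$ and $\varphi\in\Omega$) or ($i=1,j=0$) or ($i=2,j=1$) or ($i=0,j=2$). For $X\subseteq S_\Gamma$, $\mathit{max}(X)=\{x\in X:\forall y\in X\,(y\succeq_\Gamma x\Rightarrow x\succeq_\Gamma y)\}$. *)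

theory Defs
  imports Main
begin

datatype pform = PVar nat | PBot | PNot pform | PAnd pform pform | POr pform pform
  | PImp pform pform | PIff pform pform

text \<open>The language L_T. Propositional formulas are embedded via emb below,
  so that L_CL is literally a subset of L_T.\<close>
datatype tform = TVar nat | TBot | TCond pform pform | TB tform | TNot tform
  | TAnd tform tform | TOr tform tform | TImp tform tform | TIff tform tform

fun emb :: "pform \<Rightarrow> tform" where
  "emb (PVar n) = TVar n"
| "emb PBot = TBot"
| "emb (PNot a) = TNot (emb a)"
| "emb (PAnd a b) = TAnd (emb a) (emb b)"
| "emb (POr a b) = TOr (emb a) (emb b)"
| "emb (PImp a b) = TImp (emb a) (emb b)"
| "emb (PIff a b) = TIff (emb a) (emb b)"

fun teval :: "(nat \<Rightarrow> bool) \<Rightarrow> (tform \<Rightarrow> bool) \<Rightarrow> tform \<Rightarrow> bool" where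
  "teval V M (TVar n) = V n"
| "teval V M TBot = False"
| "teval V M (TCond a b) = M (TCond a b)"
| "teval V M (TB a) = M (TB a)"
| "teval V M (TNot a) = (\<not> teval V M a)"
| "teval V M (TAnd a b) = (teval V M a \<and> teval V M b)"
| "teval V M (TOr a b) = (teval V M a \<or> teval V M b)"
| "teval V M (TImp a b) = (teval V M a \<longrightarrow> teval V M b)"
| "teval V M (TIff a b) = (teval V M a \<longleftrightarrow> teval V M b)"

definition tautology :: "tform \<Rightarrow> bool" where
  "tautology a \<longleftrightarrow> (\<forall>V M. teval V M a)"

text \<open>Conjunctions of nonempty lists (only used on nonempty lists).\<close>
fun pconj :: "pform list \<Rightarrow> pform" where
  "pconj [] = PImp PBot PBot"
| "pconj [x] = x"
| "pconj (x # y # ys) = PAnd x (pconj (y # ys))"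

fun tconj :: "tform list \<Rightarrow> tform" where
  "tconj [] = TImp TBot TBot"
| "tconj [x] = x"
| "tconj (x # y # ys) = TAnd x (tconj (y # ys))"

definition cond_literal :: "tform \<Rightarrow> bool" where
  "cond_literal l \<longleftrightarrow> (\<exists>a b. l = TCond a b \<or> l = TNot (TCond a b))"

inductive sbt_thm :: "tform \<Rightarrow> bool" where
  taut: "tautology a \<Longrightarrow> sbt_thm a"
| mp: "sbt_thm (TImp a b) \<Longrightarrow> sbt_thm a \<Longrightarrow> sbt_thm b"
| refl: "sbt_thm (TCond p p)"
| botneg: "sbt_thm (TImp (TCond p PBot) (TNot (emb p)))"
| exp: "sbt_thm (TImp (TCond (PAnd q r) p) (TCond q (PImp r p)))"
| lleq: "sbt_thm (TImp (TCond (PNot (PIff p q)) PBot) (TIff (TCond p r) (TCond q r)))"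
| RCK: "ps \<noteq> [] \<Longrightarrow> sbt_thm (emb (PImp (pconj ps) p)) \<Longrightarrow>
        sbt_thm (TImp (tconj (map (\<lambda>pj. TCond q pj) ps)) (TCond q p))"
| S5F: "ls \<noteq> [] \<Longrightarrow> (\<forall>l\<in>set ls. cond_literal l) \<Longrightarrow> sbt_thm (TImp (tconj ls) (emb c)) \<Longrightarrow>
        sbt_thm (TImp (tconj ls) (TCond (PNot c) PBot))"
| K: "sbt_thm (TImp (TB (TImp a b)) (TImp (TB a) (TB b)))"
| D: "sbt_thm (TImp (TB a) (TNot (TB (TNot a))))"
| four: "sbt_thm (TImp (TB a) (TB (TB a)))"
| nec: "sbt_thm a \<Longrightarrow> sbt_thm (TB a)"

definition derives :: "tform set \<Rightarrow> tform \<Rightarrow> bool" where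
  "derives G a \<longleftrightarrow> (\<exists>L. set L \<subseteq> G \<and> sbt_thm (foldr TImp L a))"

definition mcs :: "tform set \<Rightarrow> bool" where
  "mcs G \<longleftrightarrow> \<not> derives G TBot \<and> (\<forall>a. a \<in> G \<or> TNot a \<in> G)"

definition cond_equiv :: "tform set \<Rightarrow> tform set \<Rightarrow> bool" where
  "cond_equiv G D \<longleftrightarrow> (\<forall>p q. TCond p q \<in> G \<longleftrightarrow> TCond p q \<in> D)"

definition cond_class :: "tform set \<Rightarrow> tform set set" where
  "cond_class G = {D. mcs D \<and> cond_equiv G D}"

definition cond_of :: "pform \<Rightarrow> tform set \<Rightarrow> pform set" where
  "cond_of p G = {q. TCond p q \<in> G}"

definition likely :: "tform set \<Rightarrow> pform \<Rightarrow> tform set \<Rightarrow> bool" where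
  "likely G p D \<longleftrightarrow> emb ` cond_of p G \<subseteq> D"

definition Sset :: "tform set \<Rightarrow> (tform set \<times> pform \<times> nat) set" where
  "Sset G = cond_class G \<times> UNIV \<times> {0, 1, 2}"

definition ext_set :: "tform set \<Rightarrow> pform \<Rightarrow> (tform set \<times> pform \<times> nat) set" where
  "ext_set G d = {x \<in> Sset G. emb d \<in> fst x}"

fun pref :: "tform set \<Rightarrow> (tform set \<times> pform \<times> nat) \<Rightarrow> (tform set \<times> pform \<times> nat) \<Rightarrow> bool" where
  "pref G (D, p, i) (Om, q, j) \<longleftrightarrow>
     (likely G p D \<and> emb p \<in> Om) \<or> (i = 1 \<and> j = 0) \<or> (i = 2 \<and> j = 1) \<or> (i = 0 \<and> j = 2)"

definition maxel :: "tform set \<Rightarrow> (tform set \<times> pform \<times> nat) set \<Rightarrow> (tform set \<times> pform \<times> nat) set" where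
  "maxel G X = {x \<in> X. \<forall>y\<in>X. pref G y x \<longrightarrow> pref G x y}"

end

theory Submission
  imports Defs
begin

text \<open>The index i + 1 mod 3 is above i in the cyclic part of the preference, and only the
  likelihood clause can give the converse. Hence if (\<Delta>, \<phi>, i) is maximal in [\<delta>] and
  \<Omega> \<in> [\<Gamma>] contains \<delta>, comparing with (\<Omega>, \<delta>, i + 1 mod 3) shows that \<Delta> is \<phi>-likely and \<phi> \<in> \<Omega>.
  Taking \<Omega> = \<Delta> gives (a). For (b), if \<not>(\<delta> \<rightarrow> \<phi>) \<rightsquigarrow> \<bottom> \<notin> \<Gamma>, rule S5F makes
  \<not>(\<delta> \<rightarrow> \<phi>) consistent with the conditional literals of \<Gamma>, and a Lindenbaum extension is an
  \<Omega> \<in> [\<Gamma>] with \<delta> \<in> \<Omega> but \<phi> \<notin> \<Omega>.\<close>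

lemma teval_foldr_TImp [simp]:
  "teval V M (foldr TImp L a) \<longleftrightarrow> ((\<forall>x\<in>set L. teval V M x) \<longrightarrow> teval V M a)"
  by (induction L) auto

lemma teval_tconj [simp]: "teval V M (tconj L) \<longleftrightarrow> (\<forall>x\<in>set L. teval V M x)"
  by (induction L rule: tconj.induct) auto

lemma sbt_thm_foldr_TImp_mp:
  "sbt_thm (foldr TImp As b) \<Longrightarrow> \<forall>a\<in>set As. sbt_thm a \<Longrightarrow> sbt_thm b"
  by (induction As) (auto intro: sbt_thm.mp)

lemma sbt_thm_taut_consequence:
  assumes "\<forall>a\<in>set As. sbt_thm a"
    and "\<And>V M. \<forall>a\<in>set As. teval V M a \<Longrightarrow> teval V M b"
  shows "sbt_thm b"
proof (rule sbt_thm_foldr_TImp_mp)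
  show "sbt_thm (foldr TImp As b)"
    by (rule sbt_thm.taut) (use assms(2) in \<open>auto simp: tautology_def\<close>)
qed (fact assms(1))

lemma derives_sbt_thm: "sbt_thm a \<Longrightarrow> derives S a"
  unfolding derives_def by (intro exI[of _ "[]"]) simp

lemma derives_assm: "a \<in> S \<Longrightarrow> derives S a"
  unfolding derives_def
  by (intro exI[of _ "[a]"]) (auto intro: sbt_thm.taut simp: tautology_def)

lemma derives_taut_mono:
  assumes "derives S a" and "\<And>V M. teval V M a \<Longrightarrow> teval V M b"
  shows "derives S b"
proof -
  obtain L where "set L \<subseteq> S" "sbt_thm (foldr TImp L a)"
    using assms(1) by (auto simp: derives_def)
  moreover have "sbt_thm (foldr TImp L b)"
    using \<open>sbt_thm (foldr TImp L a)\<close>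
    by (rule sbt_thm_taut_consequence[of "[_]", simplified]) (use assms(2) in auto)
  ultimately show ?thesis by (auto simp: derives_def)
qed

lemma derives_mp:
  assumes "derives S (TImp a b)" and "derives S a"
  shows "derives S b"
proof -
  obtain L1 L2 where L: "set L1 \<subseteq> S" "sbt_thm (foldr TImp L1 (TImp a b))"
    "set L2 \<subseteq> S" "sbt_thm (foldr TImp L2 a)"
    using assms by (auto simp: derives_def)
  have "sbt_thm (foldr TImp (L1 @ L2) b)"
    by (rule sbt_thm_taut_consequence[of "[foldr TImp L1 (TImp a b), foldr TImp L2 a]"])
      (use L in auto)
  then show ?thesis using L unfolding derives_def by (intro exI[of _ "L1 @ L2"]) auto
qed

lemma derives_insert_imp:
  assumes "derives (insert a S) b"
  shows "derives S (TImp a b)"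
proof -
  obtain L where L: "set L \<subseteq> insert a S" "sbt_thm (foldr TImp L b)"
    using assms by (auto simp: derives_def)
  let ?L = "filter (\<lambda>x. x \<noteq> a) L"
  have "sbt_thm (foldr TImp ?L (TImp a b))"
    using L(2) by (rule sbt_thm_taut_consequence[of "[_]", simplified]) auto
  moreover have "set ?L \<subseteq> S" using L(1) by auto
  ultimately show ?thesis unfolding derives_def by blast
qed

lemma derives_reductio: "derives (insert (TNot a) S) TBot \<Longrightarrow> derives S a"
  by (drule derives_insert_imp, erule derives_taut_mono) auto

lemma mcs_derives_closed:
  assumes "mcs G" and "derives G a"
  shows "a \<in> G"
proof (rule ccontr)
  assume "a \<notin> G"
  then have "derives G (TNot a)" using assms(1) by (auto simp: mcs_def intro: derives_assm)
  then have "derives G (TImp a TBot)" by (rule derives_taut_mono) simp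
  then have "derives G TBot" using assms(2) by (rule derives_mp)
  then show False using assms(1) by (simp add: mcs_def)
qed

lemma mcs_sbt_thm: "mcs G \<Longrightarrow> sbt_thm a \<Longrightarrow> a \<in> G"
  by (simp add: derives_sbt_thm mcs_derives_closed)

lemma mcs_TNot_iff:
  assumes "mcs G"
  shows "TNot a \<in> G \<longleftrightarrow> a \<notin> G"
proof (intro iffI notI)
  assume "TNot a \<in> G" "a \<in> G"
  then have "derives G (TImp a TBot)" "derives G a"
    by (auto intro: derives_assm derives_taut_mono)
  then show False using assms by (auto simp: mcs_def dest: derives_mp)
qed (use assms in \<open>auto simp: mcs_def\<close>)

lemma mcs_TImp_iff:
  assumes "mcs G"
  shows "TImp a b \<in> G \<longleftrightarrow> (a \<in> G \<longrightarrow> b \<in> G)"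
proof
  assume "TImp a b \<in> G"
  then show "a \<in> G \<longrightarrow> b \<in> G"
    using assms by (auto intro: mcs_derives_closed derives_mp derives_assm)
next
  assume "a \<in> G \<longrightarrow> b \<in> G"
  then have "TNot a \<in> G \<or> b \<in> G" using mcs_TNot_iff[OF assms] by blast
  then have "derives G (TImp a b)" by (auto intro: derives_assm derives_taut_mono)
  then show "TImp a b \<in> G" using assms by (rule mcs_derives_closed[rotated])
qed

lemma lindenbaum:
  assumes "\<not> derives S TBot"
  obtains G where "S \<subseteq> G" "mcs G"
proof -
  let ?A = "{T. S \<subseteq> T \<and> \<not> derives T TBot}"
  have "\<exists>M\<in>?A. \<forall>X\<in>?A. M \<subseteq> X \<longrightarrow> X = M"
  proof (rule subset_Zorn_nonempty)
    show "?A \<noteq> {}" using assms by blast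
  next
    fix C assume C: "C \<noteq> {}" "subset.chain ?A C"
    have "\<not> derives (\<Union>C) TBot"
    proof
      assume "derives (\<Union>C) TBot"
      then obtain L where L: "set L \<subseteq> \<Union>C" "sbt_thm (foldr TImp L TBot)"
        by (auto simp: derives_def)
      obtain X where "X \<in> C" "set L \<subseteq> X"
        using finite_subset_Union_chain[OF finite_set L(1) C] by metis
      then show False using L(2) C(2) by (auto simp: derives_def subset.chain_def)
    qed
    moreover have "S \<subseteq> \<Union>C"
    proof -
      obtain X where "X \<in> C" using C(1) by blast
      then show ?thesis using C(2) unfolding subset.chain_def by blast
    qed
    ultimately show "\<Union>C \<in> ?A" by simp
  qed
  then obtain M where M: "M \<in> ?A" and maximal: "\<forall>X\<in>?A. M \<subseteq> X \<longrightarrow> X = M"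
    by (rule bexE)
  have "a \<in> M \<or> TNot a \<in> M" for a
  proof (rule ccontr)
    assume "\<not> (a \<in> M \<or> TNot a \<in> M)"
    then have "derives (insert a M) TBot" "derives (insert (TNot a) M) TBot"
      using maximal[rule_format, of "insert a M"] maximal[rule_format, of "insert (TNot a) M"] M
      by auto
    then have "derives M (TImp a TBot)" "derives M a"
      by (simp_all add: derives_insert_imp derives_reductio)
    then have "derives M TBot" by (rule derives_mp)
    then show False using M by simp
  qed
  then show thesis using that M unfolding mcs_def by blast
qed

definition cond_literals :: "tform set \<Rightarrow> tform set" where
  "cond_literals G = {TCond a b |a b. TCond a b \<in> G} \<union> {TNot (TCond a b) |a b. TCond a b \<notin> G}"

lemma cond_literal_if_in_cond_literals: "l \<in> cond_literals G \<Longrightarrow> cond_literal l"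
  by (auto simp: cond_literals_def cond_literal_def)

lemma cond_literals_subset_mcs: "mcs G \<Longrightarrow> cond_literals G \<subseteq> G"
  by (auto simp: cond_literals_def mcs_TNot_iff)

lemma cond_equiv_if_cond_literals_subset:
  assumes "mcs D" and "cond_literals G \<subseteq> D"
  shows "cond_equiv G D"
  unfolding cond_equiv_def
proof (intro allI iffI)
  fix a b
  show "TCond a b \<in> G \<Longrightarrow> TCond a b \<in> D"
    using assms(2) by (auto simp: cond_literals_def)
  show "TCond a b \<in> G" if "TCond a b \<in> D"
  proof (rule ccontr)
    assume "TCond a b \<notin> G"
    then have "TNot (TCond a b) \<in> D" using assms(2) by (auto simp: cond_literals_def)
    then show False using that mcs_TNot_iff[OF assms(1)] by blast
  qed
qed

lemma mcs_S5F_closed: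
  assumes "mcs G" and "derives (cond_literals G) (emb c)"
  shows "TCond (PNot c) PBot \<in> G"
proof -
  obtain L where L: "set L \<subseteq> cond_literals G" "sbt_thm (foldr TImp L (emb c))"
    using assms(2) by (auto simp: derives_def)
  \<comment> \<open>S5F needs a nonempty list of literals; the theorem c \<rightsquigarrow> c serves as a harmless extra one.\<close>
  let ?ls = "TCond c c # L"
  have ls_in_G: "set ?ls \<subseteq> G"
    using L(1) cond_literals_subset_mcs[OF assms(1)] mcs_sbt_thm[OF assms(1) sbt_thm.refl] by auto
  have "\<forall>l\<in>set L. cond_literal l"
    using L(1) cond_literal_if_in_cond_literals by blast
  then have "\<forall>l\<in>set ?ls. cond_literal l" by (auto simp: cond_literal_def)
  moreover have "sbt_thm (TImp (tconj ?ls) (emb c))"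
    using L(2) by (rule sbt_thm_taut_consequence[of "[_]", simplified]) auto
  ultimately have "sbt_thm (TImp (tconj ?ls) (TCond (PNot c) PBot))"
    by (intro sbt_thm.S5F) simp_all
  then have "sbt_thm (foldr TImp ?ls (TCond (PNot c) PBot))"
    by (rule sbt_thm_taut_consequence[of "[_]", simplified]) auto
  then have "derives G (TCond (PNot c) PBot)"
    using ls_in_G unfolding derives_def by blast
  then show ?thesis by (rule mcs_derives_closed[OF assms(1)])
qed

lemma cond_class_refutes:
  assumes "mcs G" and "TCond (PNot c) PBot \<notin> G"
  obtains D where "D \<in> cond_class G" and "emb c \<notin> D"
proof -
  have "\<not> derives (insert (TNot (emb c)) (cond_literals G)) TBot"
    using assms mcs_S5F_closed derives_reductio by blast
  then obtain D where D: "insert (TNot (emb c)) (cond_literals G) \<subseteq> D" "mcs D"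
    by (rule lindenbaum)
  then have "D \<in> cond_class G"
    by (simp add: cond_class_def cond_equiv_if_cond_literals_subset)
  moreover have "emb c \<notin> D" using D by (simp add: mcs_TNot_iff)
  ultimately show thesis by (rule that)
qed

lemma pref_next_rank: "i \<in> {0, 1, 2} \<Longrightarrow> pref G (D', q, Suc i mod 3) (D, p, i)"
  by (elim insertE) auto

lemma pref_to_next_rank_iff:
  "i \<in> {0, 1, 2} \<Longrightarrow> pref G (D, p, i) (D', q, Suc i mod 3) \<longleftrightarrow> likely G p D \<and> emb p \<in> D'"
  by (elim insertE) auto

lemma maxel_ext_set_likely:
  assumes "(D, p, i) \<in> maxel G (ext_set G d)" and "D' \<in> cond_class G" and "emb d \<in> D'"
  shows "likely G p D \<and> emb p \<in> D'"
proof -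
  have i: "i \<in> {0, 1, 2}"
    using assms(1) by (auto simp: maxel_def ext_set_def Sset_def)
  have "(D', d, Suc i mod 3) \<in> ext_set G d"
    using assms(2,3) by (auto simp: ext_set_def Sset_def)
  then have "pref G (D, p, i) (D', d, Suc i mod 3)"
    using assms(1) pref_next_rank[OF i] unfolding maxel_def by blast
  then show ?thesis using pref_to_next_rank_iff[OF i] by blast
qed

theorem lemma2:
  fixes G D :: "tform set" and d p :: pform and i :: nat
  assumes "mcs G"
    and "(D, p, i) \<in> maxel G (ext_set G d)"
  shows "likely G p D \<and> TCond (PNot (PImp d p)) PBot \<in> G"
proof
  have "D \<in> cond_class G" and "emb d \<in> D"
    using assms(2) by (auto simp: maxel_def ext_set_def Sset_def)
  then show "likely G p D"
    using maxel_ext_set_likely[OF assms(2)] by blast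
  show "TCond (PNot (PImp d p)) PBot \<in> G"
  proof (rule ccontr)
    assume "TCond (PNot (PImp d p)) PBot \<notin> G"
    then obtain D' where D': "D' \<in> cond_class G" "emb (PImp d p) \<notin> D'"
      by (rule cond_class_refutes[OF assms(1)])
    then have "emb d \<in> D'" and "emb p \<notin> D'"
      by (auto simp: cond_class_def mcs_TImp_iff)
    then show False using maxel_ext_set_likely[OF assms(2) D'(1)] by blast
  qed
qed

end
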